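(* Let $L\ge2$, $k\ge2$, $\Lambda=\{1,\dots,L\}^2$, $\widetilde\Lambda=\{L\}\times\{1,\dots,L\}$, $\mathbf v=((1,1),(L,1))\in\Lambda^2$, and $W_k=\{\mathbf v\mathbf u:\mathbf u\in\widetilde\Lambda^{k-2}\}\subset\Lambda^k$ (concatenation of strings). Let $\lambda_1,\lambda_2,\dots$ be independent random variables taking values in $\Lambda$, and let $A_m$ be the event $(\lambda_m,\dots,\lambda_{m+k-1})\in W_k$. Then for every finite $I\subset\mathbb{N}$, \[ \mathbb{P}\Bigl[\bigcap_{i\in I}A_i^c\Bigr]\le\prod_{i\in I}\mathbb{P}[A_i^c]. \] *)

theory Defs
  imports "HOL-Probability.Probability"
begin

definition Lam :: "nat \<Rightarrow> (nat \<times> nat) set" where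
  "Lam L = {1..L} \<times> {1..L}"

definition Lamt :: "nat \<Rightarrow> (nat \<times> nat) set" where
  "Lamt L = {L} \<times> {1..L}"

definition Wk :: "nat \<Rightarrow> nat \<Rightarrow> (nat \<times> nat) list set" where
  "Wk L k = {[(1,1),(L,1)] @ u | u. length u = k - 2 \<and> set u \<subseteq> Lamt L}"

definition evA :: "'s measure \<Rightarrow> (nat \<Rightarrow> 's \<Rightarrow> nat \<times> nat) \<Rightarrow> nat \<Rightarrow> nat \<Rightarrow> nat \<Rightarrow> 's set" where
  "evA M X L k m = {\<omega> \<in> space M. map (\<lambda>j. X (m + j) \<omega>) [0..<k] \<in> Wk L k}"

end

theory Submission
  imports Defs
begin

(* Every word of W_k starts with (1,1), while all its later letters have first coordinate
   L \<noteq> 1; hence two occurrences of the pattern less than k apart are impossible.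
   Induct on I by adding its largest element b. Inside A_b, avoiding the pattern at all
   a \<in> I - {b} is the same as avoiding it at those a with a + k \<le> b, an event that
   depends only on \<lambda>'s before position b and so is independent of A_b, and that is larger
   than avoiding it on I - {b}. This gives
   P[no occurrence in I] \<le> P[no occurrence in I - {b}] * P[A_b^c]. *)

definition occurrence ::
    "'s measure \<Rightarrow> (nat \<Rightarrow> 's \<Rightarrow> 'a) \<Rightarrow> (nat \<Rightarrow> 'a set) \<Rightarrow> nat \<Rightarrow> nat \<Rightarrow> 's set" where
  "occurrence M X S k m = {\<omega>\<in>space M. \<forall>j<k. X (m + j) \<omega> \<in> S j}"

definition no_occurrence ::
    "'s measure \<Rightarrow> (nat \<Rightarrow> 's \<Rightarrow> 'a) \<Rightarrow> (nat \<Rightarrow> 'a set) \<Rightarrow> nat \<Rightarrow> nat set \<Rightarrow> 's set" where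
  "no_occurrence M X S k I = {\<omega>\<in>space M. \<forall>i\<in>I. \<omega> \<notin> occurrence M X S k i}"

definition non_overlapping :: "(nat \<Rightarrow> 'a set) \<Rightarrow> nat \<Rightarrow> bool" where
  "non_overlapping S k \<longleftrightarrow> (\<forall>d. 0 < d \<and> d < k \<longrightarrow> S 0 \<inter> S d = {})"

lemma occurrences_disjoint:
  assumes "non_overlapping S k" and "a < b" and "b < a + k"
  shows "occurrence M X S k a \<inter> occurrence M X S k b = {}"
proof -
  have "X b \<omega> \<in> S 0 \<inter> S (b - a)"
    if "\<omega> \<in> occurrence M X S k a \<inter> occurrence M X S k b" for \<omega>
  proof -
    have at_a: "\<forall>j<k. X (a + j) \<omega> \<in> S j" and at_b: "\<forall>j<k. X (b + j) \<omega> \<in> S j"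
      using that unfolding occurrence_def by auto
    show ?thesis
      using at_a[rule_format, of "b - a"] at_b[rule_format, of 0] assms(2,3) by simp
  qed
  moreover have "S 0 \<inter> S (b - a) = {}"
    using assms unfolding non_overlapping_def by auto
  ultimately show ?thesis by blast
qed

lemma no_occurrence_insert:
  "no_occurrence M X S k (insert b A) = no_occurrence M X S k A - occurrence M X S k b"
  unfolding no_occurrence_def occurrence_def by auto

lemma no_occurrence_antimono:
  "A \<subseteq> B \<Longrightarrow> no_occurrence M X S k B \<subseteq> no_occurrence M X S k A"
  unfolding no_occurrence_def by auto

lemma no_occurrence_Int_occurrence:
  assumes "non_overlapping S k" and "\<forall>a\<in>A. a < b"
  shows "no_occurrence M X S k A \<inter> occurrence M X S k b
       = no_occurrence M X S k {a\<in>A. a + k \<le> b} \<inter> occurrence M X S k b"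
proof -
  have "\<omega> \<notin> occurrence M X S k a"
    if "\<omega> \<in> occurrence M X S k b" and "a \<in> A" and "b < a + k" for \<omega> a
    using occurrences_disjoint[OF assms(1), of a b M X] that assms(2) by blast
  then show ?thesis
    unfolding no_occurrence_def using not_le by blast
qed

lemma pred_PiM_count_space_window:
  fixes K :: "nat set"
  assumes "\<And>j. j < k \<Longrightarrow> m + j \<in> K"
  shows "Measurable.pred (PiM K (\<lambda>_. count_space UNIV)) (\<lambda>x. \<forall>j<k. x (m + j) \<in> S j)"
proof -
  have "Measurable.pred (PiM K (\<lambda>_. count_space UNIV)) (\<lambda>x. \<forall>j\<in>{..<k}. x (m + j) \<in> S j)"
  proof (rule pred_intros_finite(3))
    fix j assume "j \<in> {..<k}"
    then have "(\<lambda>x. x (m + j)) \<in> measurable (PiM K (\<lambda>_. count_space UNIV)) (count_space UNIV)"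
      using assms by (intro measurable_component_singleton) simp
    then show "Measurable.pred (PiM K (\<lambda>_. count_space UNIV)) (\<lambda>x. x (m + j) \<in> S j)"
      by (rule pred_sets2[OF sets_UNIV])
  qed simp
  then show ?thesis
    unfolding lessThan_iff Ball_def .
qed

context prob_space
begin

lemma occurrence_in_events:
  assumes "\<And>j. j < k \<Longrightarrow> random_variable (count_space UNIV) (X (m + j))"
  shows "occurrence M X S k m \<in> events"
proof -
  have "Measurable.pred M (\<lambda>\<omega>. \<forall>j\<in>{..<k}. X (m + j) \<omega> \<in> S j)"
  proof (rule pred_intros_finite(3))
    fix j assume "j \<in> {..<k}"
    then show "Measurable.pred M (\<lambda>\<omega>. X (m + j) \<omega> \<in> S j)"
      using assms by (intro pred_sets2[OF sets_UNIV]) simp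
  qed simp
  then show ?thesis
    unfolding occurrence_def Measurable.pred_def lessThan_iff Ball_def .
qed

lemma no_occurrence_in_events:
  assumes "finite I" and "\<And>i. i \<in> I \<Longrightarrow> occurrence M X S k i \<in> events"
  shows "no_occurrence M X S k I \<in> events"
proof -
  have "no_occurrence M X S k I = space M - (\<Union>i\<in>I. occurrence M X S k i)"
    unfolding no_occurrence_def occurrence_def by auto
  then show ?thesis
    using assms by auto
qed

lemma indep_vars_prob_conj_restrict:
  assumes "indep_vars N X J" and "K1 \<inter> K2 = {}" and "K1 \<subseteq> J" and "K2 \<subseteq> J"
    and "Measurable.pred (PiM K1 N) P1" and "Measurable.pred (PiM K2 N) P2"
  shows "prob {\<omega>\<in>space M. P1 (\<lambda>i\<in>K1. X i \<omega>) \<and> P2 (\<lambda>i\<in>K2. X i \<omega>)}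
       = prob {\<omega>\<in>space M. P1 (\<lambda>i\<in>K1. X i \<omega>)} * prob {\<omega>\<in>space M. P2 (\<lambda>i\<in>K2. X i \<omega>)}"
proof -
  define B1 where "B1 = {x\<in>space (PiM K1 N). P1 x}"
  define B2 where "B2 = {x\<in>space (PiM K2 N). P2 x}"
  have "X i \<omega> \<in> space (N i)" if "i \<in> J" and "\<omega> \<in> space M" for i \<omega>
    using assms(1) that unfolding indep_vars_def by (auto intro: measurable_space)
  then have in_space: "(\<lambda>i\<in>K. X i \<omega>) \<in> space (PiM K N)" if "K \<subseteq> J" and "\<omega> \<in> space M" for K \<omega>
    using that by (auto simp: space_PiM)
  have "prob ((\<lambda>\<omega>. (\<lambda>i\<in>K1. X i \<omega>, \<lambda>i\<in>K2. X i \<omega>)) -` (B1 \<times> B2) \<inter> space M)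
      = prob ((\<lambda>\<omega>. \<lambda>i\<in>K1. X i \<omega>) -` B1 \<inter> space M) * prob ((\<lambda>\<omega>. \<lambda>i\<in>K2. X i \<omega>) -` B2 \<inter> space M)"
    using assms(5,6) unfolding B1_def B2_def Measurable.pred_def
    by (intro indep_varD[OF indep_var_restrict[OF assms(1-4)]])
  moreover have "(\<lambda>\<omega>. (\<lambda>i\<in>K1. X i \<omega>, \<lambda>i\<in>K2. X i \<omega>)) -` (B1 \<times> B2) \<inter> space M
      = {\<omega>\<in>space M. P1 (\<lambda>i\<in>K1. X i \<omega>) \<and> P2 (\<lambda>i\<in>K2. X i \<omega>)}"
    using in_space assms(3,4) unfolding B1_def B2_def by auto
  moreover have "(\<lambda>\<omega>. \<lambda>i\<in>K1. X i \<omega>) -` B1 \<inter> space M = {\<omega>\<in>space M. P1 (\<lambda>i\<in>K1. X i \<omega>)}"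
    using in_space assms(3) unfolding B1_def by auto
  moreover have "(\<lambda>\<omega>. \<lambda>i\<in>K2. X i \<omega>) -` B2 \<inter> space M = {\<omega>\<in>space M. P2 (\<lambda>i\<in>K2. X i \<omega>)}"
    using in_space assms(4) unfolding B2_def by auto
  ultimately show ?thesis by simp
qed

lemma prob_no_occurrence_Int_occurrence:
  assumes indep: "indep_vars (\<lambda>_. count_space UNIV) X J" and "finite A"
    and windows_A: "\<And>a j. a \<in> A \<Longrightarrow> j < k \<Longrightarrow> a + j \<in> J"
    and window_b: "\<And>j. j < k \<Longrightarrow> b + j \<in> J"
    and before: "\<forall>a\<in>A. a + k \<le> b"
  shows "prob (no_occurrence M X S k A \<inter> occurrence M X S k b)
       = prob (no_occurrence M X S k A) * prob (occurrence M X S k b)"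
proof -
  define K1 where "K1 = (\<Union>a\<in>A. {a..<a + k})"
  define K2 where "K2 = {b..<b + k}"
  define P1 where "P1 x \<longleftrightarrow> (\<forall>a\<in>A. \<not> (\<forall>j<k. x (a + j) \<in> S j))" for x :: "nat \<Rightarrow> 'b"
  define P2 where "P2 x \<longleftrightarrow> (\<forall>j<k. x (b + j) \<in> S j)" for x :: "nat \<Rightarrow> 'b"
  have pred1: "Measurable.pred (PiM K1 (\<lambda>_. count_space UNIV)) P1"
    unfolding P1_def
  proof (rule pred_intros_finite(3)[OF \<open>finite A\<close>])
    fix a assume "a \<in> A"
    then have "Measurable.pred (PiM K1 (\<lambda>_. count_space UNIV)) (\<lambda>x. \<forall>j<k. x (a + j) \<in> S j)"
      unfolding K1_def by (intro pred_PiM_count_space_window) (auto intro!: bexI[where x = a])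
    then show "Measurable.pred (PiM K1 (\<lambda>_. count_space UNIV)) (\<lambda>x. \<not> (\<forall>j<k. x (a + j) \<in> S j))"
      by (rule pred_intros_logic(2))
  qed
  have pred2: "Measurable.pred (PiM K2 (\<lambda>_. count_space UNIV)) P2"
    unfolding P2_def K2_def by (intro pred_PiM_count_space_window) auto
  have disjoint: "K1 \<inter> K2 = {}"
    using before unfolding K1_def K2_def by fastforce
  have K1: "K1 \<subseteq> J"
  proof
    fix i assume "i \<in> K1"
    then obtain a where "a \<in> A" and "a \<le> i" and "i < a + k"
      unfolding K1_def by auto
    then show "i \<in> J"
      using windows_A[of a "i - a"] by simp
  qed
  have K2: "K2 \<subseteq> J"
  proof
    fix i assume "i \<in> K2"
    then have "b \<le> i" and "i - b < k"
      unfolding K2_def by auto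
    then show "i \<in> J"
      using window_b[of "i - b"] by simp
  qed
  have "(\<lambda>i\<in>K1. X i \<omega>) (a + j) = X (a + j) \<omega>" if "a \<in> A" and "j < k" for a j \<omega>
    using that unfolding K1_def by (auto intro!: bexI[where x = a])
  then have no_occ_eq: "no_occurrence M X S k A = {\<omega>\<in>space M. P1 (\<lambda>i\<in>K1. X i \<omega>)}"
    unfolding no_occurrence_def occurrence_def P1_def by auto
  have occ_eq: "occurrence M X S k b = {\<omega>\<in>space M. P2 (\<lambda>i\<in>K2. X i \<omega>)}"
    unfolding occurrence_def P2_def K2_def by simp
  have "prob (no_occurrence M X S k A \<inter> occurrence M X S k b)
      = prob {\<omega>\<in>space M. P1 (\<lambda>i\<in>K1. X i \<omega>) \<and> P2 (\<lambda>i\<in>K2. X i \<omega>)}"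
    unfolding no_occ_eq occ_eq by (intro arg_cong[where f = prob]) blast
  also have "\<dots> = prob {\<omega>\<in>space M. P1 (\<lambda>i\<in>K1. X i \<omega>)} * prob {\<omega>\<in>space M. P2 (\<lambda>i\<in>K2. X i \<omega>)}"
    by (rule indep_vars_prob_conj_restrict[OF indep disjoint K1 K2 pred1 pred2])
  finally show ?thesis
    unfolding no_occ_eq occ_eq .
qed

lemma prob_no_occurrence_le_prod:
  assumes indep: "indep_vars (\<lambda>_. count_space UNIV) X J" and "non_overlapping S k"
    and "finite I" and "\<And>i j. i \<in> I \<Longrightarrow> j < k \<Longrightarrow> i + j \<in> J"
  shows "prob (no_occurrence M X S k I) \<le> (\<Prod>i\<in>I. prob (space M - occurrence M X S k i))"
  using assms(3,4)
proof (induction I rule: finite_linorder_max_induct)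
  case empty
  then show ?case by (simp add: no_occurrence_def)
next
  case (insert b A)
  let ?N = "no_occurrence M X S k" and ?O = "occurrence M X S k"
  define A' where "A' = {a\<in>A. a + k \<le> b}"
  have O_events: "?O i \<in> events" if "i \<in> insert b A" for i
  proof (rule occurrence_in_events)
    fix j assume "j < k"
    then have "i + j \<in> J"
      using insert.prems that by blast
    then show "random_variable (count_space UNIV) (X (i + j))"
      using indep unfolding indep_vars_def by blast
  qed
  have N_events: "?N B \<in> events" if "B \<subseteq> A" for B
    using that finite_subset[OF that insert.hyps(1)] O_events
    by (intro no_occurrence_in_events) auto
  have "?N A \<inter> ?O b = ?N A' \<inter> ?O b"
    unfolding A'_def by (rule no_occurrence_Int_occurrence[OF assms(2) insert.hyps(2)])
  moreover have "prob (?N A' \<inter> ?O b) = prob (?N A') * prob (?O b)"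
    using insert.hyps(1) insert.prems unfolding A'_def
    by (intro prob_no_occurrence_Int_occurrence[OF indep]) auto
  ultimately have factor: "prob (?N A \<inter> ?O b) = prob (?N A') * prob (?O b)"
    by simp
  have mono: "prob (?N A) \<le> prob (?N A')"
    using N_events[of A'] by (intro finite_measure_mono no_occurrence_antimono) (auto simp: A'_def)
  have "prob (?N (insert b A)) = prob (?N A) - prob (?N A \<inter> ?O b)"
    unfolding no_occurrence_insert using N_events[of A] O_events[of b]
    by (rule finite_measure_Diff') simp_all
  also have "\<dots> \<le> prob (?N A) - prob (?N A) * prob (?O b)"
    unfolding factor using mono by (simp add: mult_right_mono)
  also have "\<dots> = prob (?N A) * prob (space M - ?O b)"
    using O_events[of b] by (simp add: prob_compl right_diff_distrib)
  also have "\<dots> \<le> (\<Prod>i\<in>A. prob (space M - ?O i)) * prob (space M - ?O b)"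
    using insert.IH insert.prems by (simp add: mult_right_mono)
  also have "\<dots> = (\<Prod>i\<in>insert b A. prob (space M - ?O i))"
    using insert.hyps by (auto simp: mult.commute)
  finally show ?case .
qed

end

definition Wk_letters :: "nat \<Rightarrow> nat \<Rightarrow> (nat \<times> nat) set" where
  "Wk_letters L j = (if j = 0 then {(1,1)} else if j = 1 then {(L,1)} else Lamt L)"

lemma map_upt_in_Wk_iff:
  assumes "k \<ge> 2"
  shows "map f [0..<k] \<in> Wk L k \<longleftrightarrow> (\<forall>j<k. f j \<in> Wk_letters L j)"
proof -
  have "[0..<k] = [0, 1] @ [2..<k]"
    using assms by (simp add: upt_conv_Cons numeral_2_eq_2)
  then have "map f [0..<k] \<in> Wk L k \<longleftrightarrow> f 0 = (1,1) \<and> f 1 = (L,1) \<and> (\<forall>j\<in>{2..<k}. f j \<in> Lamt L)"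
    unfolding Wk_def by auto
  also have "\<dots> \<longleftrightarrow> (\<forall>j<k. f j \<in> Wk_letters L j)"
    using assms by (auto simp: Wk_letters_def)
  finally show ?thesis .
qed

lemma evA_eq_occurrence:
  "k \<ge> 2 \<Longrightarrow> evA M X L k m = occurrence M X (Wk_letters L) k m"
  unfolding evA_def occurrence_def by (simp add: map_upt_in_Wk_iff)

lemma non_overlapping_Wk_letters:
  "L \<noteq> 1 \<Longrightarrow> non_overlapping (Wk_letters L) k"
  unfolding non_overlapping_def Wk_letters_def Lamt_def by auto

theorem lemma4p15:
  fixes M :: "'s measure" and X :: "nat \<Rightarrow> 's \<Rightarrow> nat \<times> nat"
    and L k :: nat and I :: "nat set"
  assumes "prob_space M"
    and "L \<ge> 2" and "k \<ge> 2"
    and "prob_space.indep_vars M (\<lambda>_. count_space UNIV) X {1..}"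
    and "\<And>i \<omega>. i \<ge> 1 \<Longrightarrow> \<omega> \<in> space M \<Longrightarrow> X i \<omega> \<in> Lam L"
    and "finite I" and "I \<subseteq> {1..}"
  shows "measure M {\<omega> \<in> space M. \<forall>i\<in>I. \<omega> \<notin> evA M X L k i}
           \<le> (\<Prod>i\<in>I. measure M (space M - evA M X L k i))"
proof -
  interpret prob_space M by fact
  have "prob (no_occurrence M X (Wk_letters L) k I)
      \<le> (\<Prod>i\<in>I. prob (space M - occurrence M X (Wk_letters L) k i))"
    using assms(2,4,6,7) non_overlapping_Wk_letters[of L k]
    by (intro prob_no_occurrence_le_prod) auto
  then show ?thesis
    using assms(3) by (simp add: no_occurrence_def evA_eq_occurrence)
qed

end
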